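(* Let $X$ be a real Banach space and let $A \subset X$ be a balanced, bounded, convex, closed subset. Assume there is a finite subset $O \subset X$ such that $B_X \subset A + O$. Then for every $\lambda$ with $0<\lambda < 1/2$, $A$ contains a finite-codimensional ball of radius $\lambda$, i.e. there exist $x \in A$ and a finite-codimensional linear subspace $Y \subset X$ with $x + \lambda B_Y \subset A$.
   Context: $B_X$ is the closed unit ball of $X$ and $B_Y = B_X \cap Y$. $A$ is balanced if $tA \subset A$ for all $|t| \le 1$. $A + O$ is the Minkowski sum $\{a+o: a\in A, o\in O\}$. *)

theory Defs
  imports "HOL-Analysis.Analysis"
begin

definition balanced :: "'a::real_vector set \<Rightarrow> bool" where
  "balanced A \<longleftrightarrow> (\<forall>t::real. \<bar>t\<bar> \<le> 1 \<longrightarrow> (\<lambda>a. t *\<^sub>R a) ` A \<subseteq> A)"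

definition minkowski_sum :: "'a::real_vector set \<Rightarrow> 'a set \<Rightarrow> 'a set" where
  "minkowski_sum A Os = {a + b | a b. a \<in> A \<and> b \<in> Os}"

definition finite_codim_subspace :: "'a::real_vector set \<Rightarrow> bool" where
  "finite_codim_subspace Y \<longleftrightarrow> subspace Y \<and> (\<exists>F. finite F \<and> span (Y \<union> F) = UNIV)"

end

theory Submission
  imports Defs
begin

text \<open>Since the cover is finite, some translate of the closed set \<open>A\<close> has interior points, so the
  balanced convex set \<open>A\<close> is a neighbourhood of \<open>0\<close> and its Minkowski functional \<open>p\<close> is sublinear.
  Hahn--Banach gives for every \<open>w \<in> O\<close> a linear \<open>f\<^sub>w \<le> p\<close> with \<open>f\<^sub>w w = p w\<close>; let \<open>Y\<close> be the
  intersection of their kernels. For \<open>y \<in> B\<^sub>Y\<close> write \<open>y = a + w\<close>; then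
  \<open>p w = f\<^sub>w (w - y) = f\<^sub>w (-a) \<le> p (-a) \<le> 1 < (1 - \<lambda>) / \<lambda>\<close>, so \<open>\<lambda> w / (1 - \<lambda>) \<in> A\<close> and
  \<open>\<lambda> y = \<lambda> a + (1 - \<lambda>) (\<lambda> w / (1 - \<lambda>)) \<in> A\<close> by convexity; the ball is centred at \<open>0\<close>.\<close>

definition sublinear :: "('a::real_vector \<Rightarrow> real) \<Rightarrow> bool" where
  "sublinear q \<longleftrightarrow> (\<forall>x y. q (x + y) \<le> q x + q y) \<and> (\<forall>c x. 0 \<le> c \<longrightarrow> q (c *\<^sub>R x) = c * q x)"

lemma sublinear_add: "sublinear q \<Longrightarrow> q (x + y) \<le> q x + q y"
  unfolding sublinear_def by blast

lemma sublinear_scale: "sublinear q \<Longrightarrow> 0 \<le> c \<Longrightarrow> q (c *\<^sub>R x) = c * q x"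
  unfolding sublinear_def by blast

lemma sublinear_0: "sublinear q \<Longrightarrow> q 0 = 0"
  using sublinear_scale[of q 0 0] by simp

lemma sublinear_neg_le: "sublinear q \<Longrightarrow> - q (-x) \<le> q x"
  using sublinear_add[of q x "-x"] sublinear_0[of q] by simp

lemma sublinearI:
  assumes add: "\<And>x y. q (x + y) \<le> q x + q y" and zero: "q 0 = 0"
    and scale_le: "\<And>c x. 0 < c \<Longrightarrow> q (c *\<^sub>R x) \<le> c * q x"
  shows "sublinear q"
proof -
  have "q (c *\<^sub>R x) = c * q x" if "0 < c" for c x
  proof (rule antisym)
    have "q x = q (inverse c *\<^sub>R (c *\<^sub>R x))"
      using that by simp
    also have "\<dots> \<le> inverse c * q (c *\<^sub>R x)"
      using that by (intro scale_le) simp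
    finally show "c * q x \<le> q (c *\<^sub>R x)"
      using that by (simp add: field_simps)
  qed (use that scale_le in blast)
  then show ?thesis
    unfolding sublinear_def using add zero by (metis less_eq_real_def scale_zero_left mult_zero_left)
qed

definition inf_along :: "('a::real_vector \<Rightarrow> real) \<Rightarrow> 'a \<Rightarrow> 'a \<Rightarrow> real" where
  "inf_along m x y = (INF t\<in>{0..}. m (y + t *\<^sub>R x) - t * m x)"

lemma inf_along_le:
  assumes m: "sublinear m" and t: "0 \<le> t"
  shows "inf_along m x y \<le> m (y + t *\<^sub>R x) - t * m x"
  unfolding inf_along_def
proof (rule cINF_lower)
  show "bdd_below ((\<lambda>t. m (y + t *\<^sub>R x) - t * m x) ` {0..})"
  proof (rule bdd_belowI2)
    fix s :: real assume "s \<in> {0..}"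
    then have "s * m x = m ((y + s *\<^sub>R x) + (-y))"
      using sublinear_scale[OF m] by simp
    also have "\<dots> \<le> m (y + s *\<^sub>R x) + m (-y)"
      using sublinear_add[OF m] .
    finally show "- m (-y) \<le> m (y + s *\<^sub>R x) - s * m x"
      by simp
  qed
qed (use t in simp)

lemma inf_along_greatest:
  "(\<And>t. 0 \<le> t \<Longrightarrow> a \<le> m (y + t *\<^sub>R x) - t * m x) \<Longrightarrow> a \<le> inf_along m x y"
  unfolding inf_along_def by (rule cINF_greatest) auto

lemma inf_along_le_self: "sublinear m \<Longrightarrow> inf_along m x \<le> m"
  using inf_along_le[of m 0] by (simp add: le_fun_def)

lemma inf_along_neg: "sublinear m \<Longrightarrow> inf_along m x (-x) \<le> - m x"
  using inf_along_le[of m 1 x "-x"] sublinear_0[of m] by simp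

lemma sublinear_inf_along:
  assumes m: "sublinear m"
  shows "sublinear (inf_along m x)"
proof (rule sublinearI)
  fix y1 y2
  have "inf_along m x (y1 + y2) \<le> (m (y1 + t1 *\<^sub>R x) - t1 * m x) + (m (y2 + t2 *\<^sub>R x) - t2 * m x)"
    if "0 \<le> t1" "0 \<le> t2" for t1 t2
  proof -
    have "inf_along m x (y1 + y2) \<le> m ((y1 + t1 *\<^sub>R x) + (y2 + t2 *\<^sub>R x)) - (t1 + t2) * m x"
      using inf_along_le[OF m, of "t1 + t2" x "y1 + y2"] that by (simp add: algebra_simps)
    then show ?thesis
      using sublinear_add[OF m, of "y1 + t1 *\<^sub>R x" "y2 + t2 *\<^sub>R x"] by (simp add: algebra_simps)
  qed
  then have "inf_along m x (y1 + y2) - (m (y2 + t2 *\<^sub>R x) - t2 * m x) \<le> inf_along m x y1"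
    if "0 \<le> t2" for t2
    using that by (intro inf_along_greatest) force
  then have "inf_along m x (y1 + y2) - inf_along m x y1 \<le> inf_along m x y2"
    by (intro inf_along_greatest) force
  then show "inf_along m x (y1 + y2) \<le> inf_along m x y1 + inf_along m x y2"
    by simp
next
  have "inf_along m x 0 \<le> 0"
    using le_funD[OF inf_along_le_self[OF m], of x 0] sublinear_0[OF m] by simp
  moreover have "0 \<le> inf_along m x 0"
    by (rule inf_along_greatest) (simp add: sublinear_scale[OF m])
  ultimately show "inf_along m x 0 = 0"
    by simp
next
  fix c :: real and y assume c: "0 < c"
  have "inf_along m x (c *\<^sub>R y) / c \<le> inf_along m x y"
  proof (rule inf_along_greatest)
    fix t :: real assume t: "0 \<le> t"
    have "inf_along m x (c *\<^sub>R y) \<le> m (c *\<^sub>R (y + t *\<^sub>R x)) - (c * t) * m x"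
      using inf_along_le[OF m, of "c * t" x "c *\<^sub>R y"] c t by (simp add: scaleR_add_right)
    also have "\<dots> = c * (m (y + t *\<^sub>R x) - t * m x)"
      using sublinear_scale[OF m, of c "y + t *\<^sub>R x"] c by (simp add: algebra_simps)
    finally show "inf_along m x (c *\<^sub>R y) / c \<le> m (y + t *\<^sub>R x) - t * m x"
      using c by (simp add: divide_le_eq mult.commute)
  qed
  then show "inf_along m x (c *\<^sub>R y) \<le> c * inf_along m x y"
    using c by (simp add: divide_le_eq mult.commute)
qed

lemma linear_if_inf_along_eq:
  assumes m: "sublinear m" and fixed: "\<And>x. inf_along m x = m"
  shows "linear m"
proof -
  have additive: "m (x + y) = m x + m y" for x y
    using inf_along_le[OF m, of 1 y x] fixed[of y] sublinear_add[OF m, of x y] by simp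
  have neg: "m (-x) = - m x" for x
    using additive[of x "-x"] sublinear_0[OF m] by simp
  show ?thesis
  proof (rule linearI)
    show "m (c *\<^sub>R x) = c *\<^sub>R m x" for c x
    proof (cases "0 \<le> c")
      case True
      then show ?thesis using sublinear_scale[OF m] by simp
    next
      case False
      then have "m ((-c) *\<^sub>R (-x)) = - c * m (-x)"
        using sublinear_scale[OF m, of "-c" "-x"] by linarith
      then show ?thesis using neg[of x] by simp
    qed
  qed (rule additive)
qed

lemma bdd_below_sublinear_family:
  assumes "\<And>q. q \<in> C \<Longrightarrow> sublinear q" and "\<And>q. q \<in> C \<Longrightarrow> q \<le> g"
  shows "bdd_below ((\<lambda>q. q x) ` C)"
proof (rule bdd_belowI2)
  fix q assume "q \<in> C"
  then have "- g (-x) \<le> - q (-x)"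
    using assms(2) by (simp add: le_fun_def)
  also have "\<dots> \<le> q x"
    using assms(1)[OF \<open>q \<in> C\<close>] by (rule sublinear_neg_le)
  finally show "- g (-x) \<le> q x" .
qed

lemma INF_sublinear_family_le:
  assumes "\<And>q. q \<in> C \<Longrightarrow> sublinear q" and "\<And>q. q \<in> C \<Longrightarrow> q \<le> g" and "q \<in> C"
  shows "(\<lambda>x. INF q\<in>C. q x) \<le> q"
  using bdd_below_sublinear_family[OF assms(1,2)] assms(3) by (intro le_funI cINF_lower)

lemma sublinear_INF_chain:
  assumes nonempty: "C \<noteq> {}" and sub: "\<And>q. q \<in> C \<Longrightarrow> sublinear q"
    and below: "\<And>q. q \<in> C \<Longrightarrow> q \<le> g"
    and chain: "\<And>q1 q2. q1 \<in> C \<Longrightarrow> q2 \<in> C \<Longrightarrow> q1 \<le> q2 \<or> q2 \<le> q1"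
  shows "sublinear (\<lambda>x. INF q\<in>C. q x)"
proof -
  have lower: "(INF q\<in>C. q x) \<le> q x" if "q \<in> C" for q x
    using INF_sublinear_family_le[OF sub below that] by (rule le_funD)
  have greatest: "a \<le> (INF q\<in>C. q x)" if "\<And>q. q \<in> C \<Longrightarrow> a \<le> q x" for a x
    using nonempty that by (rule cINF_greatest)
  show ?thesis
  proof (rule sublinearI)
    fix x y
    have "(INF q\<in>C. q (x + y)) \<le> q1 x + q2 y" if q12: "q1 \<in> C" "q2 \<in> C" for q1 q2
    proof -
      obtain q where q: "q \<in> C" "q x \<le> q1 x" "q y \<le> q2 y"
        using chain[OF q12] q12 by (auto simp: le_fun_def)
      then have "(INF q\<in>C. q (x + y)) \<le> q x + q y"
        using lower sublinear_add[OF sub] order_trans by blast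
      then show ?thesis
        using q by simp
    qed
    then have "(INF q\<in>C. q (x + y)) - q2 y \<le> (INF q\<in>C. q x)" if "q2 \<in> C" for q2
      using that by (intro greatest) force
    then have "(INF q\<in>C. q (x + y)) - (INF q\<in>C. q x) \<le> (INF q\<in>C. q y)"
      by (intro greatest) force
    then show "(INF q\<in>C. q (x + y)) \<le> (INF q\<in>C. q x) + (INF q\<in>C. q y)"
      by simp
  next
    show "(INF q\<in>C. q 0) = 0"
      using nonempty sub by (simp add: sublinear_0)
  next
    fix c :: real and x assume c: "0 < c"
    have "(INF q\<in>C. q (c *\<^sub>R x)) / c \<le> (INF q\<in>C. q x)"
    proof (rule greatest)
      fix q assume "q \<in> C"
      then have "(INF q\<in>C. q (c *\<^sub>R x)) \<le> c * q x"
        using lower[of q "c *\<^sub>R x"] sublinear_scale[OF sub[of q], of c x] c by simp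
      then show "(INF q\<in>C. q (c *\<^sub>R x)) / c \<le> q x"
        using c by (simp add: divide_le_eq mult.commute)
    qed
    then show "(INF q\<in>C. q (c *\<^sub>R x)) \<le> c * (INF q\<in>C. q x)"
      using c by (simp add: divide_le_eq mult.commute)
  qed
qed

text \<open>Zorn's lemma gives a minimal sublinear \<open>m \<le> inf_along q p\<close>; minimality forces
  \<open>inf_along m x = m\<close> for all \<open>x\<close>, so \<open>m\<close> is linear, and \<open>m (-p) \<le> - q p\<close> pins down \<open>m p\<close>.\<close>

theorem Hahn_Banach_sublinear:
  fixes q :: "'a::real_vector \<Rightarrow> real"
  assumes q: "sublinear q"
  shows "\<exists>f. linear f \<and> f \<le> q \<and> f p = q p"
proof -
  define S where "S = {m. sublinear m \<and> m \<le> inf_along q p}"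
  have "partial_order_on S (relation_of (\<lambda>a b. b \<le> a) S)"
    by (rule partial_order_on_relation_ofI) auto
  moreover have "\<exists>u\<in>S. \<forall>a\<in>C. u \<le> a" if "C \<in> Chains (relation_of (\<lambda>a b. b \<le> a) S)" for C
  proof (cases "C = {}")
    case True
    then show ?thesis
      using sublinear_inf_along[OF q] unfolding S_def by blast
  next
    case False
    have "C \<subseteq> S"
      using that by (rule Chains_relation_of)
    moreover have "q1 \<le> q2 \<or> q2 \<le> q1" if "q1 \<in> C" "q2 \<in> C" for q1 q2
      using \<open>C \<in> Chains _\<close> that unfolding Chains_def relation_of_def by blast
    ultimately have "sublinear (\<lambda>x. INF m\<in>C. m x)"
      using False by (intro sublinear_INF_chain[where g = "inf_along q p"]) (auto simp: S_def)
    moreover have "(\<lambda>x. INF m\<in>C. m x) \<le> m" if "m \<in> C" for m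
      using \<open>C \<subseteq> S\<close> that by (intro INF_sublinear_family_le[where g = "inf_along q p"]) (auto simp: S_def)
    ultimately show ?thesis
      using \<open>C \<subseteq> S\<close> False unfolding S_def by (blast intro: order_trans)
  qed
  ultimately obtain m where "m \<in> S" and minimal: "\<And>a. a \<in> S \<Longrightarrow> a \<le> m \<Longrightarrow> a = m"
    by (metis predicate_Zorn)
  then have m: "sublinear m" and m_le: "m \<le> inf_along q p"
    unfolding S_def by blast+
  have "inf_along m x = m" for x
    using minimal sublinear_inf_along[OF m] inf_along_le_self[OF m] m_le order_trans
    unfolding S_def by blast
  then have "linear m"
    by (rule linear_if_inf_along_eq[OF m])
  moreover have "m \<le> q"
    using m_le inf_along_le_self[OF q] by (rule order_trans)
  moreover have "q p \<le> m p"
  proof -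
    have "m (-p) \<le> - q p"
      using le_funD[OF m_le, of "-p"] inf_along_neg[OF q, of p] by simp
    then show ?thesis
      using linear_neg[OF \<open>linear m\<close>, of p] by simp
  qed
  ultimately show ?thesis
    by (intro exI[of _ m]) (auto simp: le_fun_def intro: antisym)
qed

definition minkowski_functional :: "'a::real_vector set \<Rightarrow> 'a \<Rightarrow> real" where
  "minkowski_functional A x = Inf {t. 0 < t \<and> inverse t *\<^sub>R x \<in> A}"

lemma minkowski_functional_le:
  "0 < t \<Longrightarrow> inverse t *\<^sub>R x \<in> A \<Longrightarrow> minkowski_functional A x \<le> t"
  unfolding minkowski_functional_def by (rule cInf_lower) (auto intro: bdd_belowI[of _ 0])

lemma minkowski_functional_le_1: "a \<in> A \<Longrightarrow> minkowski_functional A a \<le> 1"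
  using minkowski_functional_le[of 1] by simp

lemma absorbing_if_zero_in_interior:
  fixes A :: "'a::real_normed_vector set"
  assumes "0 \<in> interior A"
  shows "{t. 0 < t \<and> inverse t *\<^sub>R x \<in> A} \<noteq> {}"
proof -
  obtain e where e: "0 < e" "ball 0 e \<subseteq> A"
    using assms mem_interior by blast
  define t where "t = (norm x + 1) / e"
  have t: "0 < t"
    using e norm_ge_zero[of x] unfolding t_def by (intro divide_pos_pos) linarith+
  have "norm (inverse t *\<^sub>R x) = e * (norm x / (norm x + 1))"
    using e unfolding t_def by (simp add: field_simps add_pos_nonneg)
  also have "\<dots> < e * 1"
    using e by (intro mult_strict_left_mono) (auto simp: add_nonneg_pos)
  finally have "inverse t *\<^sub>R x \<in> A"
    using e(2) by auto
  then show ?thesis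
    using t by blast
qed

lemma minkowski_functional_greatest:
  fixes A :: "'a::real_normed_vector set"
  assumes "0 \<in> interior A" and "\<And>t. 0 < t \<Longrightarrow> inverse t *\<^sub>R x \<in> A \<Longrightarrow> a \<le> t"
  shows "a \<le> minkowski_functional A x"
  unfolding minkowski_functional_def
  using absorbing_if_zero_in_interior[OF assms(1)] assms(2) by (intro cInf_greatest) auto

lemma scaled_mem_if_minkowski_functional_less:
  fixes A :: "'a::real_normed_vector set"
  assumes "convex A" "0 \<in> interior A" and less: "minkowski_functional A x < s"
  shows "inverse s *\<^sub>R x \<in> A"
proof -
  obtain t where t: "0 < t" "t < s" "inverse t *\<^sub>R x \<in> A"
    using cInf_lessD[OF absorbing_if_zero_in_interior[OF assms(2)] less[unfolded minkowski_functional_def]]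
    by blast
  have "(t / s) *\<^sub>R (inverse t *\<^sub>R x) + (1 - t / s) *\<^sub>R 0 \<in> A"
    using t assms(1,2) interior_subset by (intro convexD) auto
  then show ?thesis
    using t by (simp add: inverse_eq_divide)
qed

lemma sublinear_minkowski_functional:
  fixes A :: "'a::real_normed_vector set"
  assumes cvx: "convex A" and zero: "0 \<in> interior A"
  shows "sublinear (minkowski_functional A)"
proof (rule sublinearI)
  fix x y
  have "minkowski_functional A (x + y) \<le> s + t"
    if s: "0 < s" "inverse s *\<^sub>R x \<in> A" and t: "0 < t" "inverse t *\<^sub>R y \<in> A" for s t
  proof (rule minkowski_functional_le)
    have "(s / (s + t)) *\<^sub>R (inverse s *\<^sub>R x) + (t / (s + t)) *\<^sub>R (inverse t *\<^sub>R y) \<in> A"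
      using s t by (intro convexD[OF cvx]) (auto simp: add_divide_distrib[symmetric])
    then show "inverse (s + t) *\<^sub>R (x + y) \<in> A"
      using s t by (simp add: scaleR_add_right inverse_eq_divide)
  qed (use s t in simp)
  then have "minkowski_functional A (x + y) - t \<le> minkowski_functional A x"
    if "0 < t" "inverse t *\<^sub>R y \<in> A" for t
    using that by (intro minkowski_functional_greatest[OF zero]) force
  then have "minkowski_functional A (x + y) - minkowski_functional A x \<le> minkowski_functional A y"
    by (intro minkowski_functional_greatest[OF zero]) force
  then show "minkowski_functional A (x + y) \<le> minkowski_functional A x + minkowski_functional A y"
    by simp
next
  have "minkowski_functional A 0 \<le> t" if "0 < t" for t
    using that zero interior_subset by (intro minkowski_functional_le) auto
  then have "minkowski_functional A 0 \<le> 0"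
    by (meson dense not_le)
  moreover have "0 \<le> minkowski_functional A 0"
    by (rule minkowski_functional_greatest[OF zero]) simp
  ultimately show "minkowski_functional A 0 = 0"
    by simp
next
  fix c :: real and x assume c: "0 < c"
  have "minkowski_functional A (c *\<^sub>R x) / c \<le> minkowski_functional A x"
  proof (rule minkowski_functional_greatest[OF zero])
    fix t assume t: "0 < t" "inverse t *\<^sub>R x \<in> A"
    then have "minkowski_functional A (c *\<^sub>R x) \<le> c * t"
      using c by (intro minkowski_functional_le) (auto simp: field_simps)
    then show "minkowski_functional A (c *\<^sub>R x) / c \<le> t"
      using c by (simp add: divide_le_eq mult.commute)
  qed
  then show "minkowski_functional A (c *\<^sub>R x) \<le> c * minkowski_functional A x"
    using c by (simp add: divide_le_eq mult.commute)
qed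

lemma balanced_neg: "balanced A \<Longrightarrow> a \<in> A \<Longrightarrow> - a \<in> A"
  unfolding balanced_def using scaleR_minus1_left[of a]
  by (metis abs_minus_cancel abs_one image_subset_iff order_refl)

lemma zero_in_interior_if_balanced_convex:
  fixes A :: "'a::real_normed_vector set"
  assumes bal: "balanced A" and cvx: "convex A" and "interior A \<noteq> {}"
  shows "0 \<in> interior A"
proof -
  obtain c e where e: "0 < e" "ball c e \<subseteq> A"
    using assms(3) mem_interior by blast
  have "ball (- c) e \<subseteq> A"
  proof
    fix x assume "x \<in> ball (- c) e"
    then have "- x \<in> ball c e"
      by (simp add: dist_norm norm_minus_commute add.commute)
    then show "x \<in> A"
      using e(2) balanced_neg[OF bal] by force
  qed
  then have "c \<in> interior A" "- c \<in> interior A"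
    using e by (auto simp: mem_interior)
  then have "(1/2) *\<^sub>R c + (1/2) *\<^sub>R (- c) \<in> interior A"
    using convex_interior[OF cvx] by (intro convexD) auto
  then show ?thesis
    by simp
qed

lemma interior_finite_Union_closed_empty:
  assumes "finite I" "\<And>i. i \<in> I \<Longrightarrow> closed (T i)" "\<And>i. i \<in> I \<Longrightarrow> interior (T i) = {}"
  shows "interior (\<Union>i\<in>I. T i) = {}"
  using assms
proof (induction I rule: finite_induct)
  case (insert j I)
  then have "interior (T j \<union> (\<Union>i\<in>I. T i)) = interior (T j)"
    by (intro interior_closed_Un_empty_interior) auto
  then show ?case
    using insert by simp
qed simp

lemma interior_nonempty_if_minkowski_sum_finite:
  fixes A :: "'a::real_normed_vector set"
  assumes "closed A" "finite Os" "interior (minkowski_sum A Os) \<noteq> {}"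
  shows "interior A \<noteq> {}"
proof -
  have "minkowski_sum A Os = (\<Union>w\<in>Os. (+) w ` A)"
    unfolding minkowski_sum_def by (auto; metis add.commute)
  moreover have "interior (\<Union>w\<in>Os. (+) w ` A) = {}" if "interior A = {}"
    using that closed_translation[OF assms(1)]
    by (intro interior_finite_Union_closed_empty[OF assms(2)]) (auto simp: interior_translation)
  ultimately show ?thesis
    using assms(3) by auto
qed

lemma finite_codim_subspace_UNIV: "finite_codim_subspace UNIV"
  unfolding finite_codim_subspace_def by auto

lemma finite_codim_subspace_Int_kernel:
  fixes g :: "'a::real_vector \<Rightarrow> real"
  assumes Y: "finite_codim_subspace Y" and g: "linear g"
  shows "finite_codim_subspace (Y \<inter> {y. g y = 0})"
proof (cases "\<forall>y\<in>Y. g y = 0")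
  case True
  then have "Y \<inter> {y. g y = 0} = Y"
    by blast
  then show ?thesis
    using Y by simp
next
  case False
  obtain F where F: "finite F" "span (Y \<union> F) = UNIV"
    using Y unfolding finite_codim_subspace_def by blast
  obtain y1 where y1: "y1 \<in> Y" "g y1 \<noteq> 0"
    using False by blast
  define y0 where "y0 = inverse (g y1) *\<^sub>R y1"
  have "y0 \<in> Y"
    using y1(1) Y unfolding y0_def finite_codim_subspace_def by (simp add: subspace_scale)
  have "g y0 = 1"
    using y1(2) linear_scale[OF g] unfolding y0_def by simp
  let ?Y' = "Y \<inter> {y. g y = 0}"
  have "Y \<union> F \<subseteq> span (?Y' \<union> insert y0 F)"
  proof
    fix y assume y: "y \<in> Y \<union> F"
    show "y \<in> span (?Y' \<union> insert y0 F)"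
    proof (cases "y \<in> F")
      case False
      then have "y - g y *\<^sub>R y0 \<in> ?Y'"
        using y Y \<open>y0 \<in> Y\<close> \<open>g y0 = 1\<close> g
        by (auto simp: finite_codim_subspace_def subspace_diff subspace_scale linear_diff linear_scale)
      then have "(y - g y *\<^sub>R y0) + g y *\<^sub>R y0 \<in> span (?Y' \<union> insert y0 F)"
        by (intro span_add span_scale span_base) auto
      then show ?thesis
        by simp
    qed (simp add: span_base)
  qed
  then have "span (?Y' \<union> insert y0 F) = UNIV"
    using span_minimal[OF _ subspace_span] F(2) by blast
  moreover have "subspace ?Y'"
    using Y g by (simp add: finite_codim_subspace_def subspace_inter linear_subspace_kernel)
  ultimately show ?thesis
    unfolding finite_codim_subspace_def using F(1) by blast
qed

lemma finite_codim_subspace_kernels: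
  fixes f :: "'b \<Rightarrow> 'a::real_vector \<Rightarrow> real"
  assumes "finite S" "\<And>w. w \<in> S \<Longrightarrow> linear (f w)"
  shows "finite_codim_subspace {y. \<forall>w\<in>S. f w y = 0}"
  using assms
proof (induction S rule: finite_induct)
  case (insert w S)
  then have "finite_codim_subspace ({y. \<forall>v\<in>S. f v y = 0} \<inter> {y. f w y = 0})"
    by (intro finite_codim_subspace_Int_kernel) auto
  moreover have "{y. \<forall>v\<in>insert w S. f v y = 0} = {y. \<forall>v\<in>S. f v y = 0} \<inter> {y. f w y = 0}"
    by blast
  ultimately show ?case
    by simp
qed (simp add: finite_codim_subspace_UNIV)

lemma scaled_sum_mem_if_minkowski_functional_le_1:
  fixes A :: "'a::real_normed_vector set"
  assumes cvx: "convex A" and zero: "0 \<in> interior A" and a: "a \<in> A"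
    and w: "minkowski_functional A w \<le> 1" and lam: "0 < lam" "lam < 1/2"
  shows "lam *\<^sub>R (a + w) \<in> A"
proof -
  define s where "s = 1 / lam - 1"
  have "1 < s"
    using lam unfolding s_def by (simp add: field_simps)
  then have "inverse s *\<^sub>R w \<in> A"
    using w by (intro scaled_mem_if_minkowski_functional_less[OF cvx zero]) simp
  then have "lam *\<^sub>R a + (1 - lam) *\<^sub>R (inverse s *\<^sub>R w) \<in> A"
    using lam a by (intro convexD[OF cvx]) auto
  moreover have "(1 - lam) * inverse s = lam"
    using lam unfolding s_def by (simp add: field_simps)
  ultimately show ?thesis
    by (simp add: scaleR_add_right)
qed

lemma zero_in_interior_if_ball_covered:
  fixes A :: "'a::real_normed_vector set"
  assumes "balanced A" "convex A" "closed A" "finite Os" "cball 0 1 \<subseteq> minkowski_sum A Os"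
  shows "0 \<in> interior A"
proof -
  have "ball 0 1 \<subseteq> interior (minkowski_sum A Os)"
    using ball_subset_cball assms(5) by (intro interior_maximal) auto
  then have "interior A \<noteq> {}"
    using assms(3,4) interior_nonempty_if_minkowski_sum_finite by fastforce
  then show ?thesis
    by (rule zero_in_interior_if_balanced_convex[OF assms(1,2)])
qed

lemma minkowski_functional_le_1_if_supporting:
  assumes "balanced A" "a \<in> A" and f: "linear f" "f \<le> minkowski_functional A"
    and "f w = minkowski_functional A w" "f (a + w) = 0"
  shows "minkowski_functional A w \<le> 1"
proof -
  have "minkowski_functional A w = f w - f (a + w)"
    using assms(5,6) by simp
  also have "\<dots> = f (- a)"
    using linear_diff[OF f(1), of w "a + w"] by simp
  also have "\<dots> \<le> minkowski_functional A (- a)"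
    using f(2) by (rule le_funD)
  also have "\<dots> \<le> 1"
    using balanced_neg[OF assms(1,2)] by (rule minkowski_functional_le_1)
  finally show ?thesis .
qed

theorem corollary4p3:
  fixes A :: "'a::banach set"
  assumes "balanced A" and "bounded A" and "convex A" and "closed A"
    and "finite Os" and "cball 0 1 \<subseteq> minkowski_sum A Os"
    and "0 < lam" and "lam < 1/2"
  shows "\<exists>x\<in>A. \<exists>Y. finite_codim_subspace Y \<and>
           (\<lambda>y. x + lam *\<^sub>R y) ` (cball 0 1 \<inter> Y) \<subseteq> A"
proof -
  have zero: "0 \<in> interior A"
    using assms(1,3-6) by (rule zero_in_interior_if_ball_covered)
  have "\<forall>w. \<exists>g. linear g \<and> g \<le> minkowski_functional A \<and> g w = minkowski_functional A w"
    using Hahn_Banach_sublinear[OF sublinear_minkowski_functional[OF assms(3) zero]] by blast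
  then obtain f where f: "\<And>w. linear (f w)" "\<And>w. f w \<le> minkowski_functional A"
    "\<And>w. f w w = minkowski_functional A w"
    by metis
  define Y where "Y = {y. \<forall>w\<in>Os. f w y = 0}"
  have "lam *\<^sub>R y \<in> A" if y: "y \<in> cball 0 1" "y \<in> Y" for y
  proof -
    obtain a w where aw: "y = a + w" "a \<in> A" "w \<in> Os"
      using y(1) assms(6) unfolding minkowski_sum_def by blast
    have "minkowski_functional A w \<le> 1"
    proof (rule minkowski_functional_le_1_if_supporting[OF assms(1) aw(2) f(1-3)])
      show "f w (a + w) = 0"
        using y(2) aw unfolding Y_def by simp
    qed
    then show ?thesis
      unfolding aw(1) using assms(7,8) by (rule scaled_sum_mem_if_minkowski_functional_le_1[OF assms(3) zero aw(2)])
  qed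
  moreover have "finite_codim_subspace Y"
    unfolding Y_def using assms(5) f(1) by (rule finite_codim_subspace_kernels)
  moreover have "0 \<in> A"
    using zero interior_subset by blast
  ultimately show ?thesis
    by (intro bexI[of _ 0] exI[of _ Y]) auto
qed

end
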